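(* Let $U$ be a rise function that is three times continuously differentiable on $[0,1]$. (i) If $U''(\phi)\le0$ and $U'''(\phi)\le 2\,U''(\phi)^2/U'(\phi)$ for all $\phi\in[0,1]$, then $U$ is icpd. (ii) If $U''(\phi)\ge0$ and $U'''(\phi)\ge 2\,U''(\phi)^2/U'(\phi)$ for all $\phi\in[0,1]$, then $U$ is dcpd. More generally, $U$ is icpd if $U'''(\phi)\le 3\frac{U''(\phi)^2}{U'(\phi)}-\frac{U''(\psi)U''(\phi)U'(\phi)}{U'(\psi)^2}$ for all $0\le\psi\le\phi\le1$, and dcpd if the reverse inequality holds for all $0\le\psi\le\phi\le1$.
   Context: A rise function is a smooth $U:[0,\infty)\to[0,\infty)$ with $U'>0$, $U(0)=0$, $U(1)=1$. $H_\varepsilon(\phi)=U^{-1}(U(\phi)+\varepsilon)$ and $\Delta H(\phi,\Delta\phi,\varepsilon)=H_\varepsilon(\phi+\Delta\phi)-H_\varepsilon(\phi)$ on $\mathcal{D}=\{(\phi,\Delta\phi,\varepsilon):0\le\varepsilon\le1,\ 0\le\phi\le1,\ 0\le\Delta\phi\le U^{-1}(1-\varepsilon)-\phi\}$. $U$ is icpd (increasing the change of phase differences) if $\partial_\phi\Delta H\ge0$ on $\mathcal{D}$, and dcpd (decreasing the change of phase differences) if $\partial_\phi\Delta H\le0$ on $\mathcal{D}$. *)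

theory Defs
  imports Complex_Main
begin

definition rise_function :: "(real \<Rightarrow> real) \<Rightarrow> (real \<Rightarrow> real) \<Rightarrow> bool" where
  "rise_function U U' \<longleftrightarrow>
     U 0 = 0 \<and> U 1 = 1 \<and>
     (\<forall>x\<ge>0. U x \<ge> 0 \<and> (U has_real_derivative U' x) (at x within {0..}) \<and> U' x > 0) \<and>
     continuous_on {0..} U'"

definition Uinv :: "(real \<Rightarrow> real) \<Rightarrow> real \<Rightarrow> real" where
  "Uinv U y = inv_into {0..} U y"

definition Heps :: "(real \<Rightarrow> real) \<Rightarrow> real \<Rightarrow> real \<Rightarrow> real" where
  "Heps U \<epsilon> \<phi> = Uinv U (U \<phi> + \<epsilon>)"

definition DeltaH :: "(real \<Rightarrow> real) \<Rightarrow> real \<Rightarrow> real \<Rightarrow> real \<Rightarrow> real" where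
  "DeltaH U \<phi> d\<phi> \<epsilon> = Heps U \<epsilon> (\<phi> + d\<phi>) - Heps U \<epsilon> \<phi>"

definition domD :: "(real \<Rightarrow> real) \<Rightarrow> (real \<times> real \<times> real) set" where
  "domD U = {(\<phi>, d\<phi>, \<epsilon>). 0 \<le> \<epsilon> \<and> \<epsilon> \<le> 1 \<and> 0 \<le> \<phi> \<and> \<phi> \<le> 1 \<and>
                             0 \<le> d\<phi> \<and> d\<phi> \<le> Uinv U (1 - \<epsilon>) - \<phi>}"

definition icpd :: "(real \<Rightarrow> real) \<Rightarrow> bool" where
  "icpd U \<longleftrightarrow> (\<forall>\<phi> d\<phi> \<epsilon>. (\<phi>, d\<phi>, \<epsilon>) \<in> domD U \<longrightarrow>
      (\<exists>d\<ge>0. ((\<lambda>p. DeltaH U p d\<phi> \<epsilon>) has_real_derivative d)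
               (at \<phi> within {p. (p, d\<phi>, \<epsilon>) \<in> domD U})))"

definition dcpd :: "(real \<Rightarrow> real) \<Rightarrow> bool" where
  "dcpd U \<longleftrightarrow> (\<forall>\<phi> d\<phi> \<epsilon>. (\<phi>, d\<phi>, \<epsilon>) \<in> domD U \<longrightarrow>
      (\<exists>d\<le>0. ((\<lambda>p. DeltaH U p d\<phi> \<epsilon>) has_real_derivative d)
               (at \<phi> within {p. (p, d\<phi>, \<epsilon>) \<in> domD U})))"

end

theory Submission
  imports Defs
begin

(* Write H = H_eps and k = U''/U'^2.  Since U (H p) = U p + eps, the chain rule
   gives H'(p) = U'(p) / U'(H p), hence
     d/dphi DeltaH(phi, dphi, eps) = G(phi + dphi) - G(phi),   G(p) = U'(p) / U'(H p),
   and differentiating once more,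
     G'(p) = U'(p)^2 / U'(H p) * (k p - k (H p)).
   Because H p >= p, G is increasing whenever k is antitone and decreasing whenever k is
   monotone; so U is icpd if k is antitone and dcpd if k is monotone.  Finally
     k' = (U''' - 2 U''^2 / U') / U'^2,
   so k is antitone under U''' <= 2 U''^2/U' and monotone under the reverse inequality.  All
   four hypotheses of the theorem imply one of these two inequalities. *)

lemma has_real_derivative_within_atLeast_at:
  fixes f :: "real \<Rightarrow> real"
  assumes "(f has_real_derivative D) (at x within {a..})" "a < x"
  shows "(f has_real_derivative D) (at x)"
proof -
  have "(f has_real_derivative D) (at x within {a..x+1})"
    using assms(1) by (rule DERIV_subset) auto
  thus ?thesis using at_within_Icc_at[of a x "x+1"] assms(2) by simp
qed

locale rise_fun =
  fixes U U1 :: "real \<Rightarrow> real"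
  assumes rise: "rise_function U U1"
begin

lemma U_0: "U 0 = 0" and U_1: "U 1 = 1" and U1_pos: "x \<ge> 0 \<Longrightarrow> U1 x > 0"
  and U_deriv: "x \<ge> 0 \<Longrightarrow> (U has_real_derivative U1 x) (at x within {0..})"
  and U1_cont: "continuous_on {0..} U1"
  using rise unfolding rise_function_def by auto

lemma U_deriv_at: "x > 0 \<Longrightarrow> DERIV U x :> U1 x"
  by (metis U_deriv has_real_derivative_within_atLeast_at less_imp_le)

lemma U_cont: "continuous_on {0..} U"
  by (rule DERIV_continuous_on[of _ _ U1]) (use U_deriv in auto)

lemma U_less: assumes "0 \<le> x" "x < y" shows "U x < U y"
proof (rule DERIV_pos_imp_increasing_open[OF assms(2)])
  fix z assume "x < z" "z < y"
  thus "\<exists>d. DERIV U z :> d \<and> d > 0"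
    using assms U_deriv_at U1_pos by (intro exI[of _ "U1 z"]) auto
next
  show "continuous_on {x..y} U" by (rule continuous_on_subset[OF U_cont]) (use assms in auto)
qed

lemma U_le_iff: "0 \<le> x \<Longrightarrow> 0 \<le> y \<Longrightarrow> U x \<le> U y \<longleftrightarrow> x \<le> y"
  using U_less by (metis linorder_not_le order_less_imp_le order_antisym_conv)

lemma U_mono: "0 \<le> x \<Longrightarrow> x \<le> y \<Longrightarrow> U x \<le> U y"
  using U_le_iff by simp

lemma U_nonneg: "0 \<le> x \<Longrightarrow> 0 \<le> U x"
  using U_mono[of 0 x] U_0 by simp

lemma Uinv_U: "0 \<le> x \<Longrightarrow> Uinv U (U x) = x"
proof -
  have "inj_on U {0..}" by (rule inj_onI) (metis atLeast_iff U_le_iff order_antisym order_refl)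
  thus "0 \<le> x \<Longrightarrow> Uinv U (U x) = x" unfolding Uinv_def by (simp add: inv_into_f_f)
qed

text \<open>The inverse is studied on the value range of [0,2], which strictly contains [0,1],
  so that it is differentiable at every value U p + eps with p in [0,1] and eps > 0.\<close>
lemma U_image: "U ` {0..2} = {0..U 2}"
proof
  show "U ` {0..2} \<subseteq> {0..U 2}" using U_mono U_nonneg by auto
next
  show "{0..U 2} \<subseteq> U ` {0..2}"
  proof
    fix y assume y: "y \<in> {0..U 2}"
    have "\<exists>x. 0 \<le> x \<and> x \<le> 2 \<and> U x = y"
      by (rule IVT') (use y U_0 continuous_on_subset[OF U_cont] in auto)
    thus "y \<in> U ` {0..2}" by auto
  qed
qed

lemma U_2_gt_1: "U 2 > 1"
  using U_less[of 1 2] U_1 by simp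

lemma Uinv_props: assumes "0 \<le> y" "y \<le> U 2"
  shows "U (Uinv U y) = y" "0 \<le> Uinv U y"
proof -
  obtain x where "x \<in> {0..2}" "U x = y" using U_image assms by force
  thus "U (Uinv U y) = y" "0 \<le> Uinv U y" using Uinv_U by auto
qed

lemma Uinv_cont: "continuous_on {0..U 2} (Uinv U)"
proof -
  have "continuous_on (U ` {0..2}) (Uinv U)"
    by (rule continuous_on_inv) (use continuous_on_subset[OF U_cont] Uinv_U in auto)
  thus ?thesis using U_image by simp
qed

lemma Uinv_deriv: assumes "0 < y" "y < U 2"
  shows "DERIV (Uinv U) y :> inverse (U1 (Uinv U y))"
proof (rule DERIV_inverse_function[where a=0 and b="U 2" and f=U])
  have y: "U (Uinv U y) = y" "0 \<le> Uinv U y" using Uinv_props assms by auto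
  hence "Uinv U y > 0" using U_0 assms by (metis order_le_less less_irrefl)
  thus "DERIV U (Uinv U y) :> U1 (Uinv U y)" using U_deriv_at by simp
  show "U1 (Uinv U y) \<noteq> 0" using U1_pos y by (metis less_irrefl)
  show "0 < y" "y < U 2" by fact+
  show "\<And>z. 0 < z \<Longrightarrow> z < U 2 \<Longrightarrow> U (Uinv U z) = z" using Uinv_props by simp
  have "continuous_on {0<..<U 2} (Uinv U)" by (rule continuous_on_subset[OF Uinv_cont]) auto
  thus "isCont (Uinv U) y"
    using assms by (metis continuous_on_eq_continuous_at open_greaterThanLessThan greaterThanLessThan_iff)
qed

lemma Uinv_one_minus: assumes "0 \<le> e" "e \<le> 1"
  shows "U (Uinv U (1-e)) = 1 - e" "0 \<le> Uinv U (1-e)" "Uinv U (1-e) \<le> 1"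
proof -
  show u: "U (Uinv U (1-e)) = 1 - e" "0 \<le> Uinv U (1-e)"
    using Uinv_props[of "1-e"] assms U_2_gt_1 by auto
  show "Uinv U (1-e) \<le> 1" using U_le_iff[of "Uinv U (1-e)" 1] u U_1 assms by auto
qed

lemma Heps_props: assumes "0 \<le> e" "e \<le> 1" "0 \<le> p" "p \<le> Uinv U (1-e)"
  shows "U (Heps U e p) = U p + e" "0 \<le> Heps U e p" "p \<le> Heps U e p" "Heps U e p \<le> 1"
proof -
  have up: "U p \<le> 1 - e" using Uinv_one_minus[OF assms(1,2)] U_mono[OF assms(3,4)] by simp
  have "0 \<le> U p + e" "U p + e \<le> U 2" using up U_nonneg[OF assms(3)] U_2_gt_1 assms by auto
  thus h: "U (Heps U e p) = U p + e" "0 \<le> Heps U e p" unfolding Heps_def using Uinv_props by auto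
  show "p \<le> Heps U e p" using U_le_iff[OF assms(3) h(2)] h assms by simp
  show "Heps U e p \<le> 1" using U_le_iff[OF h(2), of 1] h up U_1 by simp
qed

lemma Heps_less_1: assumes "0 \<le> e" "e \<le> 1" "0 \<le> p" "p < Uinv U (1-e)"
  shows "Heps U e p < 1"
proof -
  have "U p < 1 - e" using Uinv_one_minus[OF assms(1,2)] U_less[OF assms(3,4)] by simp
  hence "U (Heps U e p) < U 1" using Heps_props[OF assms(1,2,3)] assms U_1 by simp
  thus ?thesis using U_le_iff[of 1 "Heps U e p"] Heps_props[OF assms(1,2,3)] assms by force
qed

lemma Heps_comp: "Heps U e = Uinv U \<circ> (\<lambda>q. U q + e)"
  by (auto simp: Heps_def fun_eq_iff)

lemma Heps_deriv: assumes "0 < e" "e \<le> 1" "0 \<le> p" "p \<le> Uinv U (1-e)"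
  shows "(Heps U e has_real_derivative U1 p / U1 (Heps U e p)) (at p within {0..})"
proof -
  have up: "U p \<le> 1 - e" using Uinv_one_minus assms U_mono[OF assms(3,4)] by simp
  have "0 < U p + e" "U p + e < U 2" using up U_nonneg[OF assms(3)] U_2_gt_1 assms by auto
  hence "DERIV (Uinv U) (U p + e) :> inverse (U1 (Heps U e p))"
    using Uinv_deriv unfolding Heps_def by simp
  moreover have "((\<lambda>q. U q + e) has_real_derivative U1 p) (at p within {0..})"
    using U_deriv[OF assms(3)] by (auto intro!: derivative_eq_intros)
  ultimately have "(Uinv U \<circ> (\<lambda>q. U q + e) has_real_derivative
      inverse (U1 (Heps U e p)) * U1 p) (at p within {0..})"
    by (rule DERIV_chain)
  with Heps_comp show ?thesis by (simp add: field_simps)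
qed

lemma Heps_cont: assumes "0 \<le> e" "e \<le> 1"
  shows "continuous_on {0..Uinv U (1-e)} (Heps U e)"
proof -
  have "continuous_on {0..Uinv U (1-e)} (\<lambda>q. U q + e)"
    by (intro continuous_intros continuous_on_subset[OF U_cont]) auto
  moreover have "(\<lambda>q. U q + e) ` {0..Uinv U (1-e)} \<subseteq> {0..U 2}"
  proof
    fix y assume "y \<in> (\<lambda>q. U q + e) ` {0..Uinv U (1-e)}"
    then obtain p where p: "0 \<le> p" "p \<le> Uinv U (1-e)" and y: "y = U p + e" by auto
    have "U p \<le> 1 - e" using Uinv_one_minus[OF assms] U_mono[OF p] by simp
    thus "y \<in> {0..U 2}" using y U_nonneg[OF p(1)] U_2_gt_1 assms by auto
  qed
  ultimately have "continuous_on {0..Uinv U (1-e)} (Uinv U \<circ> (\<lambda>q. U q + e))"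
    by (intro continuous_on_compose continuous_on_subset[OF Uinv_cont])
  thus ?thesis by (simp add: Heps_comp)
qed

text \<open>For eps = 0, H_0 is the identity on the half line, so DeltaH does not depend on phi.\<close>
lemma DeltaH_eps0_deriv: assumes D: "(ph, dph, 0) \<in> domD U"
  shows "((\<lambda>p. DeltaH U p dph 0) has_real_derivative 0) (at ph within {p. (p, dph, 0) \<in> domD U})"
proof (rule has_field_derivative_transform_within[OF DERIV_const[of dph] zero_less_one])
  show "ph \<in> {p. (p, dph, 0) \<in> domD U}" using D by simp
  fix x assume "x \<in> {p. (p, dph, 0) \<in> domD U}"
  hence "0 \<le> x" "0 \<le> dph" unfolding domD_def by auto
  thus "dph = DeltaH U x dph 0" unfolding DeltaH_def Heps_def using Uinv_U by simp
qed

end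

locale rise_fun_C3 = rise_fun +
  fixes U2 U3 :: "real \<Rightarrow> real"
  assumes U1_deriv: "\<forall>x\<in>{0..1}. (U1 has_real_derivative U2 x) (at x within {0..1})"
    and U2_deriv: "\<forall>x\<in>{0..1}. (U2 has_real_derivative U3 x) (at x within {0..1})"
begin

lemma U1_deriv_at: "0 < x \<Longrightarrow> x < 1 \<Longrightarrow> DERIV U1 x :> U2 x"
  using U1_deriv at_within_Icc_at[of 0 x 1] by (metis atLeastAtMost_iff less_imp_le)

lemma U2_deriv_at: "0 < x \<Longrightarrow> x < 1 \<Longrightarrow> DERIV U2 x :> U3 x"
  using U2_deriv at_within_Icc_at[of 0 x 1] by (metis atLeastAtMost_iff less_imp_le)

text \<open>The quantity whose monotonicity decides between icpd and dcpd.\<close>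
definition k :: "real \<Rightarrow> real" where "k x = U2 x / (U1 x)^2"

lemma k_deriv: assumes "0 < x" "x < 1"
  shows "DERIV k x :> (U3 x - 2 * (U2 x)^2 / U1 x) / (U1 x)^2"
proof -
  have p: "U1 x > 0" using U1_pos assms by simp
  have sq: "DERIV (\<lambda>x. (U1 x)^2) x :> 2 * U1 x * U2 x"
    using DERIV_mult[OF U1_deriv_at U1_deriv_at] assms by (simp add: power2_eq_square algebra_simps)
  have "DERIV (\<lambda>x. U2 x / (U1 x)^2) x
      :> (U3 x * (U1 x)^2 - U2 x * (2 * U1 x * U2 x)) / ((U1 x)^2 * (U1 x)^2)"
    using DERIV_divide[OF U2_deriv_at sq] assms p by simp
  moreover have "(U3 x * (U1 x)^2 - U2 x * (2 * U1 x * U2 x)) / ((U1 x)^2 * (U1 x)^2)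
      = (U3 x - 2 * (U2 x)^2 / U1 x) / (U1 x)^2"
    using p by (simp add: field_simps power2_eq_square)
  ultimately show ?thesis unfolding k_def[abs_def] by simp
qed

lemma k_cont: "continuous_on {0..1} k"
proof -
  have "continuous_on {0..1} U2"
    by (rule DERIV_continuous_on[of _ _ U3]) (use U2_deriv in auto)
  thus ?thesis unfolding k_def[abs_def] using U1_pos
    by (intro continuous_on_divide) (auto intro!: continuous_intros continuous_on_subset[OF U1_cont]
        simp: less_imp_neq[symmetric])
qed

lemma k_antitone: assumes h: "\<forall>x\<in>{0..1}. U3 x \<le> 2 * (U2 x)^2 / U1 x"
  and xy: "0 \<le> x" "x \<le> y" "y \<le> 1" shows "k y \<le> k x"
proof (rule DERIV_nonpos_imp_decreasing_open[OF xy(2)])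
  fix z assume "x < z" "z < y"
  hence "DERIV k z :> (U3 z - 2 * (U2 z)^2 / U1 z) / (U1 z)^2"
    and "(U3 z - 2 * (U2 z)^2 / U1 z) / (U1 z)^2 \<le> 0"
    using k_deriv[of z] h xy by (auto intro!: divide_nonpos_nonneg)
  thus "\<exists>d. DERIV k z :> d \<and> d \<le> 0" by blast
qed (rule continuous_on_subset[OF k_cont], use xy in auto)

lemma k_monotone: assumes h: "\<forall>x\<in>{0..1}. U3 x \<ge> 2 * (U2 x)^2 / U1 x"
  and xy: "0 \<le> x" "x \<le> y" "y \<le> 1" shows "k x \<le> k y"
proof (rule DERIV_nonneg_imp_increasing_open[OF xy(2)])
  fix z assume "x < z" "z < y"
  hence "DERIV k z :> (U3 z - 2 * (U2 z)^2 / U1 z) / (U1 z)^2"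
    and "(U3 z - 2 * (U2 z)^2 / U1 z) / (U1 z)^2 \<ge> 0"
    using k_deriv[of z] h xy by auto
  thus "\<exists>d. DERIV k z :> d \<and> d \<ge> 0" by blast
qed (rule continuous_on_subset[OF k_cont], use xy in auto)

text \<open>G_eps = H_eps', so that the phi-derivative of DeltaH is a difference of values of G_eps.\<close>
definition G :: "real \<Rightarrow> real \<Rightarrow> real" where "G e p = U1 p / U1 (Heps U e p)"

lemma G_cont: assumes "0 \<le> e" "e \<le> 1" shows "continuous_on {0..Uinv U (1-e)} (G e)"
proof -
  have "continuous_on {0..Uinv U (1-e)} (\<lambda>p. U1 (Heps U e p))"
    by (rule continuous_on_compose2[OF U1_cont Heps_cont[OF assms]]) (use Heps_props[OF assms] in auto)
  moreover have "continuous_on {0..Uinv U (1-e)} U1" by (rule continuous_on_subset[OF U1_cont]) auto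
  ultimately show ?thesis unfolding G_def[abs_def] using Heps_props[OF assms] U1_pos
    by (intro continuous_on_divide) (auto simp: less_imp_neq[symmetric])
qed

lemma G_deriv: assumes "0 < e" "e \<le> 1" "0 < p" "p < Uinv U (1-e)"
  shows "DERIV (G e) p :> (U1 p)^2 / U1 (Heps U e p) * (k p - k (Heps U e p))"
proof -
  let ?H = "Heps U e p"
  have H: "p \<le> ?H" "?H < 1" using Heps_props[of e p] Heps_less_1[of e p] assms by auto
  have p1: "p < 1" using Uinv_one_minus[of e] assms by simp
  have pos: "U1 p > 0" "U1 ?H > 0" using U1_pos H assms by auto
  have dH: "DERIV (Heps U e) p :> U1 p / U1 ?H"
    using has_real_derivative_within_atLeast_at[OF Heps_deriv[of e p]] assms by simp
  have dUH: "DERIV (U1 \<circ> Heps U e) p :> U2 ?H * (U1 p / U1 ?H)"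
    using DERIV_chain[OF U1_deriv_at[of ?H] dH] H assms by simp
  have dU1: "DERIV U1 p :> U2 p" using U1_deriv_at p1 assms by simp
  have "DERIV (\<lambda>x. U1 x / (U1 \<circ> Heps U e) x) p
           :> (U2 p * U1 ?H - U1 p * (U2 ?H * (U1 p / U1 ?H))) / (U1 ?H * U1 ?H)"
    using DERIV_divide[OF dU1 dUH] pos by simp
  moreover have "(U2 p * U1 ?H - U1 p * (U2 ?H * (U1 p / U1 ?H))) / (U1 ?H * U1 ?H)
     = (U1 p)^2 / U1 ?H * (k p - k ?H)"
    using pos unfolding k_def by (simp add: field_simps power2_eq_square)
  ultimately show ?thesis unfolding G_def[abs_def] by (simp add: o_def)
qed

text \<open>Since H_eps p \<ge> p, an antitone k makes G_eps increasing ...\<close>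
lemma G_monotone: assumes kk: "\<And>x y. 0 \<le> x \<Longrightarrow> x \<le> y \<Longrightarrow> y \<le> 1 \<Longrightarrow> k y \<le> k x"
  and e: "0 < e" "e \<le> 1" and ab: "0 \<le> a" "a \<le> b" "b \<le> Uinv U (1-e)"
  shows "G e a \<le> G e b"
proof (rule DERIV_nonneg_imp_increasing_open[OF ab(2)])
  fix z assume z: "a < z" "z < b"
  have H: "z \<le> Heps U e z" "Heps U e z \<le> 1" "U1 (Heps U e z) > 0"
    using Heps_props[of e z] U1_pos[of "Heps U e z"] e ab z by auto
  hence "k (Heps U e z) \<le> k z" using kk z ab by simp
  hence "(U1 z)^2 / U1 (Heps U e z) * (k z - k (Heps U e z)) \<ge> 0" using H by simp
  moreover have "DERIV (G e) z :> (U1 z)^2 / U1 (Heps U e z) * (k z - k (Heps U e z))"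
    by (rule G_deriv) (use e ab z in auto)
  ultimately show "\<exists>d. DERIV (G e) z :> d \<and> d \<ge> 0" by blast
qed (rule continuous_on_subset[OF G_cont], use e ab in auto)

text \<open>... and a monotone k makes G_eps decreasing.\<close>
lemma G_antitone: assumes kk: "\<And>x y. 0 \<le> x \<Longrightarrow> x \<le> y \<Longrightarrow> y \<le> 1 \<Longrightarrow> k x \<le> k y"
  and e: "0 < e" "e \<le> 1" and ab: "0 \<le> a" "a \<le> b" "b \<le> Uinv U (1-e)"
  shows "G e b \<le> G e a"
proof (rule DERIV_nonpos_imp_decreasing_open[OF ab(2)])
  fix z assume z: "a < z" "z < b"
  have H: "z \<le> Heps U e z" "Heps U e z \<le> 1" "U1 (Heps U e z) > 0"
    using Heps_props[of e z] U1_pos[of "Heps U e z"] e ab z by auto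
  hence "k z \<le> k (Heps U e z)" using kk z ab by simp
  hence "(U1 z)^2 / U1 (Heps U e z) * (k z - k (Heps U e z)) \<le> 0"
    using H by (intro mult_nonneg_nonpos) auto
  moreover have "DERIV (G e) z :> (U1 z)^2 / U1 (Heps U e z) * (k z - k (Heps U e z))"
    by (rule G_deriv) (use e ab z in auto)
  ultimately show "\<exists>d. DERIV (G e) z :> d \<and> d \<le> 0" by blast
qed (rule continuous_on_subset[OF G_cont], use e ab in auto)

lemma DeltaH_deriv: assumes D: "(ph, dph, e) \<in> domD U" and e: "0 < e"
  shows "((\<lambda>p. DeltaH U p dph e) has_real_derivative G e (ph + dph) - G e ph)
           (at ph within {p. (p, dph, e) \<in> domD U})"
proof -
  let ?S = "{p. (p, dph, e) \<in> domD U}"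
  have D': "e \<le> 1" "0 \<le> ph" "0 \<le> dph" "dph \<le> Uinv U (1-e) - ph"
    using D unfolding domD_def by auto
  have S: "?S \<subseteq> {0..}" "(\<lambda>p. p + dph) ` ?S \<subseteq> {0..}" unfolding domD_def by auto
  have "(Heps U e has_real_derivative G e (ph + dph)) (at (ph + dph) within {0..})"
    using Heps_deriv[of e "ph + dph"] D' e unfolding G_def by simp
  hence "(Heps U e \<circ> (\<lambda>p. p + dph) has_real_derivative G e (ph + dph) * 1) (at ph within ?S)"
    by (intro DERIV_image_chain[OF DERIV_subset[OF _ S(2)]]) (auto intro!: derivative_eq_intros)
  moreover have "(Heps U e has_real_derivative G e ph) (at ph within ?S)"
    using DERIV_subset[OF Heps_deriv[of e ph] S(1)] D' e unfolding G_def by simp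
  ultimately show ?thesis unfolding DeltaH_def by (simp add: o_def DERIV_diff)
qed

lemma icpd_if_k_antitone:
  assumes "\<And>x y. 0 \<le> x \<Longrightarrow> x \<le> y \<Longrightarrow> y \<le> 1 \<Longrightarrow> k y \<le> k x"
  shows "icpd U"
  unfolding icpd_def
proof (intro allI impI)
  fix ph dph e assume D: "(ph, dph, e) \<in> domD U"
  have D': "0 \<le> e" "e \<le> 1" "0 \<le> ph" "0 \<le> dph" "dph \<le> Uinv U (1-e) - ph"
    using D unfolding domD_def by auto
  show "\<exists>d\<ge>0. ((\<lambda>p. DeltaH U p dph e) has_real_derivative d) (at ph within {p. (p, dph, e) \<in> domD U})"
  proof (cases "e = 0")
    case True thus ?thesis using DeltaH_eps0_deriv D by auto
  next
    case False
    hence "G e ph \<le> G e (ph + dph)" using G_monotone[OF assms] D' by simp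
    thus ?thesis using DeltaH_deriv[OF D] False D' by (intro exI[of _ "G e (ph + dph) - G e ph"]) auto
  qed
qed

lemma dcpd_if_k_monotone:
  assumes "\<And>x y. 0 \<le> x \<Longrightarrow> x \<le> y \<Longrightarrow> y \<le> 1 \<Longrightarrow> k x \<le> k y"
  shows "dcpd U"
  unfolding dcpd_def
proof (intro allI impI)
  fix ph dph e assume D: "(ph, dph, e) \<in> domD U"
  have D': "0 \<le> e" "e \<le> 1" "0 \<le> ph" "0 \<le> dph" "dph \<le> Uinv U (1-e) - ph"
    using D unfolding domD_def by auto
  show "\<exists>d\<le>0. ((\<lambda>p. DeltaH U p dph e) has_real_derivative d) (at ph within {p. (p, dph, e) \<in> domD U})"
  proof (cases "e = 0")
    case True thus ?thesis using DeltaH_eps0_deriv D by auto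
  next
    case False
    hence "G e (ph + dph) \<le> G e ph" using G_antitone[OF assms] D' by simp
    thus ?thesis using DeltaH_deriv[OF D] False D' by (intro exI[of _ "G e (ph + dph) - G e ph"]) auto
  qed
qed

lemma general_bound_diagonal: "0 \<le> x \<Longrightarrow>
    3 * (U2 x)\<^sup>2 / U1 x - U2 x * U2 x * U1 x / (U1 x)\<^sup>2 = 2 * (U2 x)\<^sup>2 / U1 x"
  using U1_pos[of x] by (simp add: field_simps power2_eq_square)

end

theorem mainTheorem12:
  fixes U U1 U2 U3 :: "real \<Rightarrow> real"
  assumes rise: "rise_function U U1"
    and d2: "\<forall>x\<in>{0..1}. (U1 has_real_derivative U2 x) (at x within {0..1})"
    and d3: "\<forall>x\<in>{0..1}. (U2 has_real_derivative U3 x) (at x within {0..1})"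
    and c3: "continuous_on {0..1} U3"
  shows "((\<forall>\<phi>\<in>{0..1}. U2 \<phi> \<le> 0 \<and> U3 \<phi> \<le> 2 * (U2 \<phi>)\<^sup>2 / U1 \<phi>) \<longrightarrow> icpd U)
    \<and> ((\<forall>\<phi>\<in>{0..1}. U2 \<phi> \<ge> 0 \<and> U3 \<phi> \<ge> 2 * (U2 \<phi>)\<^sup>2 / U1 \<phi>) \<longrightarrow> dcpd U)
    \<and> ((\<forall>\<psi> \<phi>. 0 \<le> \<psi> \<and> \<psi> \<le> \<phi> \<and> \<phi> \<le> 1 \<longrightarrow>
           U3 \<phi> \<le> 3 * (U2 \<phi>)\<^sup>2 / U1 \<phi> - U2 \<psi> * U2 \<phi> * U1 \<phi> / (U1 \<psi>)\<^sup>2) \<longrightarrow> icpd U)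
    \<and> ((\<forall>\<psi> \<phi>. 0 \<le> \<psi> \<and> \<psi> \<le> \<phi> \<and> \<phi> \<le> 1 \<longrightarrow>
           U3 \<phi> \<ge> 3 * (U2 \<phi>)\<^sup>2 / U1 \<phi> - U2 \<psi> * U2 \<phi> * U1 \<phi> / (U1 \<psi>)\<^sup>2) \<longrightarrow> dcpd U)"
proof -
  interpret rise_fun_C3 U U1 U2 U3 using rise d2 d3 by unfold_locales
  have icpd: "icpd U" if "\<forall>x\<in>{0..1}. U3 x \<le> 2 * (U2 x)\<^sup>2 / U1 x"
    using icpd_if_k_antitone k_antitone[OF that] by blast
  have dcpd: "dcpd U" if "\<forall>x\<in>{0..1}. U3 x \<ge> 2 * (U2 x)\<^sup>2 / U1 x"
    using dcpd_if_k_monotone k_monotone[OF that] by blast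
  show ?thesis
  proof (intro conjI impI)
    assume h: "\<forall>\<psi> \<phi>. 0 \<le> \<psi> \<and> \<psi> \<le> \<phi> \<and> \<phi> \<le> 1 \<longrightarrow>
           U3 \<phi> \<le> 3 * (U2 \<phi>)\<^sup>2 / U1 \<phi> - U2 \<psi> * U2 \<phi> * U1 \<phi> / (U1 \<psi>)\<^sup>2"
    show "icpd U" by (rule icpd) (use h general_bound_diagonal in fastforce)
  next
    assume h: "\<forall>\<psi> \<phi>. 0 \<le> \<psi> \<and> \<psi> \<le> \<phi> \<and> \<phi> \<le> 1 \<longrightarrow>
           U3 \<phi> \<ge> 3 * (U2 \<phi>)\<^sup>2 / U1 \<phi> - U2 \<psi> * U2 \<phi> * U1 \<phi> / (U1 \<psi>)\<^sup>2"
    show "dcpd U" by (rule dcpd) (use h general_bound_diagonal in fastforce)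
  qed (use icpd dcpd in auto)
qed

end
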